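(* Let $n$ be a positive integer and $k$ an integer with $0\le k\le n-1$. Then $$\binom{2k}{k}\sum_{i=0}^{k}\left(\binom{n}{k+i+1}+4\binom{n}{k+i+2}\right)\binom{k+i}{i}\binom{k}{i}\equiv 0\pmod n.$$
   Context: Binomial coefficients $\binom{a}{b}$ with $b>a\ge 0$ are zero. *)

theory Defs
  imports Main
begin

end

theory Submission
  imports Defs
begin

text \<open>Grouping the sum by the coefficient \<open>C(n,k+i+1)\<close> and using
  \<open>(k+i+1) C(n,k+i+1) = n C(n-1,k+i)\<close>, it suffices that \<open>k+i+1\<close> divides
  \<open>C(2k,k) (C(k+i,i) C(k,i) + 4 C(k+i-1,i-1) C(k,i-1))\<close> for \<open>0 \<le> i \<le> k+1\<close>.
  At the ends \<open>i = 0\<close> and \<open>i = k+1\<close> this is the integrality of the Catalan number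
  \<open>C(2k,k)/(k+1)\<close>; in between it follows from a polynomial identity obtained by
  eliminating neighbouring binomial coefficients through their ratios.\<close>

lemma Suc_times_choose_Suc: "Suc k * (n choose Suc k) = (n - k) * (n choose k)"
  using binomial_absorption[of k n] binomial_absorb_comp[of n k] by simp

lemma Suc_dvd_central_binomial: "Suc k dvd ((2*k) choose k)"
proof -
  have "Suc k * ((2*k) choose Suc k) = k * ((2*k) choose k)"
    using Suc_times_choose_Suc[of k "2*k"] by simp
  then have "(2*k) choose k = Suc k * (((2*k) choose k) - ((2*k) choose Suc k))"
    by (simp add: diff_mult_distrib2)
  then show ?thesis
    by (metis dvd_triv_left)
qed

lemma dvd_choose_Suc_mult:
  assumes "Suc m dvd x"
  shows "n dvd (n choose Suc m) * x"
proof -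
  obtain q where "x = Suc m * q"
    using assms by blast
  then have "(n choose Suc m) * x = (Suc m * (n choose Suc m)) * q"
    by (simp only: ac_simps)
  also have "\<dots> = n * (((n - 1) choose m) * q)"
    by (simp only: binomial_absorption mult.assoc)
  finally show ?thesis
    by simp
qed

text \<open>Read with \<open>A = C(2k,k)\<close>, \<open>A' = C(2k,k+1)\<close>, \<open>c = C(2k,k+j+1)\<close>,
  \<open>c' = C(2k,k+j+2)\<close>, \<open>r = C(k+j+1,j+1)\<close>, \<open>r' = C(k+j,j)\<close>, \<open>s = C(k,j+1)\<close>,
  \<open>s' = C(k,j)\<close>, \<open>s'' = C(k+1,j+1)\<close>: the hypotheses are the ratios of neighbouring
  binomial coefficients, and the identity shows that \<open>k+j+2\<close> divides \<open>A(rs + 4r's')\<close>.\<close>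

lemma binomial_ratio_identity:
  fixes A A' c c' r r' s s' s'' K J :: "'a::idom"
  assumes "(K+J+2)*c' + (J+1)*c = K*c" and "(K+J+1)*r' = (J+1)*r"
    and "K*s' = (J+1)*s + J*s'" and "K*s'' = (K+1)*s + J*s''"
    and "(K+1)*A' = K*A" and "A*s = c*r"
    and "K+J+1 \<noteq> 0" "K \<noteq> J" "K+1 \<noteq> 0" "r \<noteq> 0"
  shows "A*(r*s + 4*r'*s') + (K+J+2)*(2*(A*r'*s + A'*r'*s'') + c'*r^2)
       = (K+J+2)*(c*r^2 + 2*A*r'*s'')"
proof -
  have "(K+J+1)*(K-J)*(K+1)*r *
      (A*(r*s + 4*r'*s') + (K+J+2)*(2*(A*r'*s + A'*r'*s'') + c'*r^2))
    = (K+J+1)*(K-J)*(K+1)*r * ((K+J+2)*(c*r^2 + 2*A*r'*s''))"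
    using assms(1-6) by algebra
  moreover have "(K+J+1)*(K-J)*(K+1)*r \<noteq> 0"
    using assms(7-10) by simp
  ultimately show ?thesis
    by simp
qed

lemma binomial_ratio_identity_nat:
  fixes A A' c c' r r' s s' s'' k j :: nat
  assumes "(k+j+2)*c' + (j+1)*c = k*c" and "(k+j+1)*r' = (j+1)*r"
    and "k*s' = (j+1)*s + j*s'" and "k*s'' = (k+1)*s + j*s''"
    and "(k+1)*A' = k*A" and "A*s = c*r"
    and "j < k" "0 < r"
  shows "A*(r*s + 4*r'*s') + (k+j+2)*(2*(A*r'*s + A'*r'*s'') + c'*r^2)
       = (k+j+2)*(c*r^2 + 2*A*r'*s'')"
proof -
  note int_eq = assms(1-6)[THEN arg_cong[where f = int],
      unfolded of_nat_add of_nat_mult of_nat_numeral of_nat_1]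
  have "int (A*(r*s + 4*r'*s') + (k+j+2)*(2*(A*r'*s + A'*r'*s'') + c'*r^2))
      = int ((k+j+2)*(c*r^2 + 2*A*r'*s''))"
    unfolding of_nat_add of_nat_mult of_nat_power of_nat_numeral
    by (rule binomial_ratio_identity[OF int_eq]) (use assms(7,8) in simp_all)
  then show ?thesis
    by (simp only: of_nat_eq_iff)
qed

lemma central_binomial_mult_choose_choose:
  assumes "j \<le> k"
  shows "((2*k) choose k) * (k choose j) = ((2*k) choose (k+j)) * ((k+j) choose j)"
proof -
  have "((2*k) choose k) * (k choose j) = ((2*k) choose j) * ((2*k - j) choose (k - j))"
    using choose_mult[of j k "2*k"] assms by simp
  also have "(2*k - j) choose (k - j) = (2*k - j) choose k"
    using binomial_symmetric[of "k-j" "2*k-j"] assms by simp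
  also have "((2*k) choose j) * \<dots> = ((2*k) choose (k+j)) * ((k+j) choose j)"
    using choose_mult[of j "k+j" "2*k"] assms by simp
  finally show ?thesis .
qed

lemma Suc_Suc_add_dvd_central_binomial_mult:
  "Suc (Suc (k+j)) dvd ((2*k) choose k) *
     (((k+j+1) choose (j+1)) * (k choose (j+1)) + 4 * (((k+j) choose j) * (k choose j)))"
proof (cases j k rule: linorder_cases)
  case less
  define A A' where "A = (2*k) choose k" and "A' = (2*k) choose (k+1)"
  define c c' where "c = (2*k) choose (k+j+1)" and "c' = (2*k) choose (k+j+2)"
  define r r' where "r = (k+j+1) choose (j+1)" and "r' = (k+j) choose j"
  define s s' s'' where "s = k choose (j+1)" and "s' = k choose j" and "s'' = (k+1) choose (j+1)"
  have c'_ratio: "(k+j+2)*c' + (j+1)*c = k*c"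
  proof -
    have "(k+j+2)*c' = (k-j-1)*c"
      using Suc_times_choose_Suc[of "k+j+1" "2*k"] unfolding c_def c'_def by simp
    moreover have "(k-j-1)*c + (j+1)*c = ((k-j-1) + (j+1))*c"
      by (simp only: add_mult_distrib)
    ultimately show ?thesis
      using less by simp
  qed
  have r'_ratio: "(k+j+1)*r' = (j+1)*r"
    using Suc_times_binomial_eq[of "k+j" j] unfolding r_def r'_def by simp
  have s'_ratio: "k*s' = (j+1)*s + j*s'"
  proof -
    have "(j+1)*s = (k-j)*s'"
      using Suc_times_choose_Suc[of j k] unfolding s_def s'_def by simp
    moreover have "(k-j)*s' + j*s' = k*s'"
      using less by (simp flip: add_mult_distrib)
    ultimately show ?thesis by simp
  qed
  have s''_ratio: "k*s'' = (k+1)*s + j*s''"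
  proof -
    have "(k-j)*s'' = (k+1)*s"
      using binomial_absorb_comp[of "k+1" "j+1"] unfolding s_def s''_def by simp
    moreover have "(k-j)*s'' + j*s'' = k*s''"
      using less by (simp flip: add_mult_distrib)
    ultimately show ?thesis by simp
  qed
  have A'_ratio: "(k+1)*A' = k*A"
    using Suc_times_choose_Suc[of k "2*k"] unfolding A_def A'_def by simp
  have A_mult_s: "A*s = c*r"
    using central_binomial_mult_choose_choose[of "j+1" k] less unfolding A_def s_def c_def r_def
    by simp
  have "0 < r"
    unfolding r_def by (rule zero_less_binomial) simp
  from binomial_ratio_identity_nat[OF c'_ratio r'_ratio s'_ratio s''_ratio A'_ratio A_mult_s less this]
  have "k+j+2 dvd A*(r*s + 4*r'*s')"
    by (metis dvd_add_left_iff dvd_triv_left)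
  then show ?thesis
    unfolding A_def r_def s_def r'_def s'_def by (simp add: algebra_simps)
next
  case equal
  obtain q where q: "(2*k) choose k = Suc k * q"
    using Suc_dvd_central_binomial by blast
  have "((2*k) choose k) *
      (((k+j+1) choose (j+1)) * (k choose (j+1)) + 4 * (((k+j) choose j) * (k choose j)))
    = ((2*k) choose k) * (4 * ((2*k) choose k))"
    using equal by (simp add: mult_2)
  also have "\<dots> = Suc (Suc (k+j)) * (2 * q * ((2*k) choose k))"
    using equal by (subst (2) q) (simp add: algebra_simps)
  finally show ?thesis
    by (metis dvd_triv_left)
qed (simp add: binomial_eq_0)

lemma sum_shift_weights:
  fixes a w :: "nat \<Rightarrow> 'a::comm_semiring_1"
  assumes "w (Suc k) = 0"
  shows "(\<Sum>i=0..k. (a i + 4 * a (Suc i)) * w i)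
       = a 0 * w 0 + (\<Sum>i=0..k. a (Suc i) * (w (Suc i) + 4 * w i))"
proof -
  have "(\<Sum>i=0..k. a i * w i) = (\<Sum>i=0..Suc k. a i * w i)"
    using assms by simp
  also have "\<dots> = a 0 * w 0 + (\<Sum>i=0..k. a (Suc i) * w (Suc i))"
    by (simp only: sum.atLeast0_atMost_Suc_shift comp_def)
  finally show ?thesis
    by (simp add: algebra_simps sum.distrib sum_distrib_left)
qed

theorem mainTheorem9:
  fixes n k :: nat
  assumes "n \<ge> 1" and "k \<le> n - 1"
  shows "n dvd ((2*k) choose k) *
    (\<Sum>i=0..k. ((n choose (k+i+1)) + 4 * (n choose (k+i+2))) * ((k+i) choose i) * (k choose i))"
proof -
  let ?a = "\<lambda>i. n choose (k+i+1)" and ?w = "\<lambda>i. ((k+i) choose i) * (k choose i)"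
  have "(\<Sum>i=0..k. ((n choose (k+i+1)) + 4 * (n choose (k+i+2))) * ((k+i) choose i) * (k choose i))
      = ?a 0 * ?w 0 + (\<Sum>i=0..k. ?a (Suc i) * (?w (Suc i) + 4 * ?w i))"
    using sum_shift_weights[of ?w k ?a] by (simp add: mult.assoc binomial_eq_0)
  moreover have "n dvd ((2*k) choose k) * (?a 0 * ?w 0)"
    using dvd_choose_Suc_mult[OF Suc_dvd_central_binomial, of n k] by (simp add: ac_simps)
  moreover have "n dvd ((2*k) choose k) * (?a (Suc j) * (?w (Suc j) + 4 * ?w j))" for j
    using dvd_choose_Suc_mult[OF Suc_Suc_add_dvd_central_binomial_mult[of k j], of n]
    by (simp add: ac_simps)
  ultimately show ?thesis
    by (simp add: distrib_left sum_distrib_left dvd_sum)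
qed

end
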